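(* There exist a tight $7$-point simplex and a tight $8$-point simplex in $G(2,4)$.
   Context: $G(2,4)$ is the space of $2$-dimensional linear subspaces of $\mathbb{R}^4$, each identified with its orthogonal projection matrix. A tight $N$-point simplex in $G(m,n)$ is a set of $N$ distinct subspaces with projection matrices $\Pi_1,\dots,\Pi_N$ such that $\operatorname{tr}(\Pi_i\Pi_j)=\frac{m(Nm-n)}{n(N-1)}$ for all $i\ne j$; for $(m,n)=(2,4)$ this value is $\frac{N-2}{N-1}$. *)

theory Defs
  imports "HOL-Analysis.Analysis"
begin

text \<open>The Grassmannian G(m,n) of m-dimensional subspaces of R^n, with n = CARD('n),
  each subspace identified with its orthogonal projection matrix: a symmetric
  idempotent real n x n matrix of rank m.\<close>
definition proj_grassmannian :: "nat \<Rightarrow> (real^'n^'n) set" where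
  "proj_grassmannian m = {P. transpose P = P \<and> P ** P = P \<and> rank P = m}"

definition tight_simplex :: "nat \<Rightarrow> nat \<Rightarrow> (nat \<Rightarrow> real^'n^'n) \<Rightarrow> bool" where
  "tight_simplex m N P \<longleftrightarrow>
     (\<forall>i<N. P i \<in> proj_grassmannian m) \<and> inj_on P {..<N} \<and>
     (\<forall>i<N. \<forall>j<N. i \<noteq> j \<longrightarrow>
        trace (P i ** P j) =
          real m * (real N * real m - real CARD('n)) / (real CARD('n) * (real N - 1)))"

end

theory Submission
  imports Defs
begin

text \<open>A plane in R^4 is encoded by a pair (a, b) of unit vectors in R^3 (essentially the
  self-dual and anti-self-dual parts of its unit 2-vector). The projection onto it is
  pair_proj a b = (1/c) U^T U for the frame U = pair_frame a b, whose two rows are orthogonal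
  of squared length c = 2(1 - a.b) by Lagrange's identity, and
  tr(pair_proj a b * pair_proj a' b') = 1 + (a.a')(b.b'). As the tight value for G(2,4) is
  1 - 1/(N-1), a tight N-point simplex comes from N pairs with (a_i.a_j)(b_i.b_j) = -1/(N-1).
  For N = 7 the vectors a_k and b_k lie on horizontal circles at the angles 4 pi k/7 and 2 pi k/7,
  and the condition reduces to cos t + cos 2t + cos 3t = -1/2 for t = 2 pi d/7 with 7 not dividing d.\<close>

unbundle cross3_syntax

lemma vector_4 [simp]:
  "(vector [w, x, y, z] :: 'a::zero^4) $ 1 = w"
  "(vector [w, x, y, z] :: 'a::zero^4) $ 2 = x"
  "(vector [w, x, y, z] :: 'a::zero^4) $ 3 = y"
  "(vector [w, x, y, z] :: 'a::zero^4) $ 4 = z"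
  unfolding vector_def by simp_all

definition vec_cons :: "real \<Rightarrow> real^3 \<Rightarrow> real^4" where
  "vec_cons t v = vector [t, v$1, v$2, v$3]"

lemma inner_vec_cons [simp]: "vec_cons s v \<bullet> vec_cons t w = s * t + v \<bullet> w"
  by (simp add: vec_cons_def inner_vec_def sum_3 sum_4)

lemma matrix_mul_transpose_nth: "(V ** transpose V) $ i $ j = V $ i \<bullet> V $ j"
  for V :: "real^'n^'m"
  by (simp add: matrix_matrix_mult_def transpose_def inner_vec_def mult.commute)

lemma normalized_gram_in_proj_grassmannian:
  fixes V :: "real^'n^'m"
  assumes VV: "V ** transpose V = c *\<^sub>R mat 1" and "c \<noteq> 0"
  shows "inverse c *\<^sub>R (transpose V ** V) \<in> proj_grassmannian CARD('m)"
proof -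
  define Q where "Q = inverse c *\<^sub>R (transpose V ** V)"
  have sym: "transpose Q = Q"
    by (simp add: Q_def transpose_scalar matrix_transpose_mul)
  have "Q ** Q = (inverse c * inverse c) *\<^sub>R (transpose V ** (V ** transpose V) ** V)"
    by (simp add: Q_def matrix_scalar_ac scalar_matrix_assoc[symmetric] matrix_mul_assoc)
  also have "\<dots> = Q"
    using \<open>c \<noteq> 0\<close> by (simp add: VV Q_def matrix_scalar_ac scalar_matrix_assoc[symmetric])
  finally have idem: "Q ** Q = Q" .
  have "Q = (inverse c *\<^sub>R transpose V) ** V"
    by (simp only: Q_def scalar_matrix_assoc)
  then have "rank Q \<le> rank (inverse c *\<^sub>R transpose V)"
    by (metis rank_mul_le_left)
  also have "\<dots> \<le> CARD('m)"
    using rank_bound[of "inverse c *\<^sub>R transpose V"] by simp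
  finally have "rank Q \<le> CARD('m)" .
  moreover have "(inverse c *\<^sub>R V) ** Q ** transpose V = mat 1"
    using \<open>c \<noteq> 0\<close>
    by (simp add: Q_def VV matrix_mul_assoc matrix_scalar_ac scalar_matrix_assoc[symmetric] field_simps)
  then have "CARD('m) \<le> rank Q"
    by (metis rank_I rank_mul_le_left rank_mul_le_right order_trans)
  ultimately show ?thesis
    unfolding proj_grassmannian_def Q_def[symmetric] using sym idem by simp
qed

definition pair_proj :: "real^3 \<Rightarrow> real^3 \<Rightarrow> real^4^4" where
  "pair_proj a b = (let r = \<lambda>k. (1 + a \<bullet> b) *\<^sub>R axis k 1 - (a$k *\<^sub>R b + b$k *\<^sub>R a) in
     (1/2) *\<^sub>R vector [vec_cons (1 - a \<bullet> b) (a \<times> b),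
       vec_cons ((a \<times> b)$1) (r 1), vec_cons ((a \<times> b)$2) (r 2), vec_cons ((a \<times> b)$3) (r 3)])"

definition pair_frame :: "real^3 \<Rightarrow> real^3 \<Rightarrow> real^4^2" where
  "pair_frame a b = vector [vec_cons (1 - a \<bullet> b) (a \<times> b), vec_cons 0 (a - b)]"

lemma pair_proj_trace:
  "trace (pair_proj a b ** pair_proj c d) = 1 + (a \<bullet> c) * (b \<bullet> d)"
  by (simp add: pair_proj_def vec_cons_def trace_def matrix_matrix_mult_def sum_4 sum_3 cross3_def
      inner_vec_def axis_def field_simps)

lemma pair_frame_gram:
  assumes "norm a = 1" "norm b = 1"
  shows "pair_frame a b ** transpose (pair_frame a b) = (2 * (1 - a \<bullet> b)) *\<^sub>R mat 1"
proof -
  have "norm (a \<times> b) ^ 2 + (a \<bullet> b) ^ 2 = 1" using norm_cross_dot[of a b] assms by simp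
  then have "(1 - a \<bullet> b) * (1 - a \<bullet> b) + (a \<times> b) \<bullet> (a \<times> b) = 2 * (1 - a \<bullet> b)"
    by (simp add: power2_norm_eq_inner[symmetric] algebra_simps power2_eq_square)
  moreover have "(a - b) \<bullet> (a - b) = 2 * (1 - a \<bullet> b)"
    using assms by (simp add: inner_diff norm_eq_1 inner_commute)
  moreover have "(a \<times> b) \<bullet> (a - b) = 0" "(a - b) \<bullet> (a \<times> b) = 0"
    by (simp_all add: inner_diff dot_cross_self inner_commute)
  ultimately show ?thesis
    by (simp add: vec_eq_iff forall_2 matrix_mul_transpose_nth pair_frame_def mat_def)
qed

lemma pair_frame_outer:
  assumes "norm a = 1" "norm b = 1"
  shows "transpose (pair_frame a b) ** pair_frame a b = (2 * (1 - a \<bullet> b)) *\<^sub>R pair_proj a b"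
  using assms unfolding norm_eq_1
  by (simp add: vec_eq_iff forall_4 pair_proj_def pair_frame_def vec_cons_def
      matrix_matrix_mult_def sum_2 sum_3 cross3_def inner_vec_def axis_def transpose_def) algebra

lemma pair_proj_in_proj_grassmannian:
  assumes "norm a = 1" "norm b = 1" "a \<bullet> b \<noteq> 1"
  shows "pair_proj a b \<in> proj_grassmannian 2"
proof -
  have "pair_proj a b = inverse (2 * (1 - a \<bullet> b)) *\<^sub>R (transpose (pair_frame a b) ** pair_frame a b)"
    using assms by (simp add: pair_frame_outer)
  then show ?thesis
    using normalized_gram_in_proj_grassmannian[OF pair_frame_gram] assms by simp
qed

lemma tight_simplex_pair_proj:
  fixes a b :: "nat \<Rightarrow> real^3"
  assumes "2 \<le> N"
    and unit: "\<And>i. i < N \<Longrightarrow> norm (a i) = 1 \<and> norm (b i) = 1 \<and> a i \<bullet> b i \<noteq> 1"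
    and pairs: "\<And>i j. i < N \<Longrightarrow> j < N \<Longrightarrow> i \<noteq> j \<Longrightarrow>
      (a i \<bullet> a j) * (b i \<bullet> b j) = -1 / (real N - 1)"
  shows "tight_simplex 2 N (\<lambda>i. pair_proj (a i) (b i))"
  unfolding tight_simplex_def
proof (intro conjI allI impI)
  have N: "real N - 1 > 0" using \<open>2 \<le> N\<close> by simp
  fix i j assume ij: "i < N" "j < N" "i \<noteq> j"
  show "trace (pair_proj (a i) (b i) ** pair_proj (a j) (b j)) =
      real 2 * (real N * real 2 - real CARD(4)) / (real CARD(4) * (real N - 1))"
    using pairs[OF ij] N by (simp add: pair_proj_trace field_simps)
next
  show "inj_on (\<lambda>i. pair_proj (a i) (b i)) {..<N}"
  proof (rule inj_onI, rule ccontr)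
    fix i j assume "i \<in> {..<N}" "j \<in> {..<N}" "i \<noteq> j"
      and eq: "pair_proj (a i) (b i) = pair_proj (a j) (b j)"
    have "1 - 1 / (real N - 1) = trace (pair_proj (a i) (b i) ** pair_proj (a j) (b j))"
      using pairs[of i j] \<open>i \<in> {..<N}\<close> \<open>j \<in> {..<N}\<close> \<open>i \<noteq> j\<close> by (simp add: pair_proj_trace)
    also have "\<dots> = trace (pair_proj (a i) (b i) ** pair_proj (a i) (b i))"
      by (simp only: eq)
    also have "\<dots> = 2"
      using unit[of i] \<open>i \<in> {..<N}\<close> by (simp add: pair_proj_trace norm_eq_1)
    finally show False using \<open>2 \<le> N\<close> by (simp add: field_simps)
  qed
qed (use unit pair_proj_in_proj_grassmannian in auto)

lemma sum_cos_even_multiples: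
  "2 * sin z * (\<Sum>k=1..m. cos (2 * real k * z)) = sin ((2 * real m + 1) * z) - sin z"
proof (induction m)
  case (Suc m)
  have "z + 2 * real (Suc m) * z = (2 * real (Suc m) + 1) * z"
    and "z - 2 * real (Suc m) * z = - ((2 * real m + 1) * z)"
    by (simp_all add: algebra_simps)
  then have "2 * sin z * cos (2 * real (Suc m) * z)
      = sin ((2 * real (Suc m) + 1) * z) - sin ((2 * real m + 1) * z)"
    using sin_times_cos[of z "2 * real (Suc m) * z"] by simp
  with Suc show ?case by (simp add: distrib_left)
qed simp

lemma sum_cos_odd_roots_of_unity:
  fixes d :: int
  assumes "\<not> int (2 * m + 1) dvd d"
  shows "(\<Sum>k=1..m. cos (2 * pi * real k * d / (2 * m + 1))) = -1/2"
proof -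
  define z where "z = pi * d / (2 * m + 1)"
  have sin_z: "sin z \<noteq> 0"
  proof
    assume "sin z = 0"
    then obtain i where "z = of_int i * pi" by (auto simp: sin_zero_iff_int2)
    then have "pi * real_of_int d = pi * real_of_int (int (2 * m + 1) * i)"
      by (simp add: z_def field_simps)
    then have "real_of_int d = real_of_int (int (2 * m + 1) * i)"
      by simp
    with assms show False by (metis dvd_triv_left of_int_eq_iff)
  qed
  have "sin ((2 * real m + 1) * z) = 0"
    unfolding sin_zero_iff_int2 by (rule exI[of _ d]) (simp add: z_def field_simps add_pos_pos)
  then have "sin z * (2 * (\<Sum>k=1..m. cos (2 * real k * z)) + 1) = 0"
    using sum_cos_even_multiples[of z m] by (simp add: algebra_simps)
  then have "(\<Sum>k=1..m. cos (2 * real k * z)) = -1/2"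
    using sin_z by simp
  then show ?thesis
    by (simp add: z_def mult_ac)
qed

definition circle_point :: "real \<Rightarrow> real \<Rightarrow> real \<Rightarrow> real^3" where
  "circle_point r h x = vector [r * cos x, r * sin x, h]"

lemma inner_circle_point:
  "circle_point r h x \<bullet> circle_point s t y = r * s * cos (x - y) + h * t"
  by (simp add: circle_point_def inner_vec_def sum_3 cos_diff algebra_simps)

lemma heptagon_product:
  fixes d :: int
  assumes "\<not> 7 dvd d"
  defines "x \<equiv> 2 * pi * d / 7"
  shows "cos (2 * x) * (2/3 * cos x + 1/3) = -1/6"
proof -
  have sum: "cos x + cos (2 * x) + cos (3 * x) = -1/2"
    using sum_cos_odd_roots_of_unity[of 3 d] assms
    by (simp add: numeral_3_eq_3 x_def mult_ac)
  have "cos (2 * x) * (2/3 * cos x + 1/3) = (2 * (cos (2 * x) * cos x) + cos (2 * x)) / 3"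
    by (simp add: algebra_simps)
  also have "\<dots> = (cos x + cos (2 * x) + cos (3 * x)) / 3"
    using cos_times_cos[of "2 * x" x] by (simp add: algebra_simps)
  also have "\<dots> = -1/6"
    by (simp add: sum)
  finally show ?thesis .
qed

lemma tight_simplex_7:
  "tight_simplex 2 7 (\<lambda>k. pair_proj (circle_point 1 0 (4 * pi * k / 7))
                                 (circle_point (sqrt (2/3)) (sqrt (1/3)) (2 * pi * k / 7)))"
proof (rule tight_simplex_pair_proj)
  fix i :: nat
  have "sqrt (2/3) * cos (4 * pi * i / 7 - 2 * pi * i / 7) \<le> sqrt (2/3)"
    by (simp add: mult_left_le)
  also have "\<dots> < 1"
    by (simp add: real_sqrt_lt_1_iff)
  finally show "norm (circle_point 1 0 (4 * pi * i / 7)) = 1 \<and>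
      norm (circle_point (sqrt (2/3)) (sqrt (1/3)) (2 * pi * i / 7)) = 1 \<and>
      circle_point 1 0 (4 * pi * i / 7) \<bullet> circle_point (sqrt (2/3)) (sqrt (1/3)) (2 * pi * i / 7) \<noteq> 1"
    by (simp add: norm_eq_1 inner_circle_point)
next
  fix i j :: nat assume "i < 7" "j < 7" "i \<noteq> j"
  define d where "d = int i - int j"
  have "\<not> 7 dvd d"
    using \<open>i < 7\<close> \<open>j < 7\<close> \<open>i \<noteq> j\<close> unfolding d_def by presburger
  have angles: "4 * pi * i / 7 - 4 * pi * j / 7 = 2 * (2 * pi * d / 7)"
    "2 * pi * i / 7 - 2 * pi * j / 7 = 2 * pi * d / 7"
    by (simp_all add: d_def field_simps)
  show "(circle_point 1 0 (4 * pi * i / 7) \<bullet> circle_point 1 0 (4 * pi * j / 7)) *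
      (circle_point (sqrt (2/3)) (sqrt (1/3)) (2 * pi * i / 7) \<bullet>
       circle_point (sqrt (2/3)) (sqrt (1/3)) (2 * pi * j / 7)) = -1 / (real 7 - 1)"
    unfolding inner_circle_point angles using heptagon_product[OF \<open>\<not> 7 dvd d\<close>] by simp
qed simp

definition oct_p :: real where "oct_p = sqrt ((3 - sqrt 2) / 7)"
definition oct_q :: real where "oct_q = sqrt ((3 + sqrt 2) / 7)"
definition oct_r :: real where "oct_r = sqrt ((4 + sqrt 2) / 14)"
definition oct_s :: real where "oct_s = sqrt ((4 - sqrt 2) / 14)"

definition octagon_a :: "nat \<Rightarrow> real^3" where
  "octagon_a k = [vector [oct_p, oct_r, oct_r], vector [oct_p, -oct_r, -oct_r],
     vector [-oct_p, oct_r, -oct_r], vector [-oct_p, -oct_r, oct_r],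
     vector [-oct_q, -oct_s, oct_s], vector [-oct_q, oct_s, -oct_s],
     vector [oct_q, -oct_s, -oct_s], vector [oct_q, oct_s, oct_s]] ! k"

definition octagon_b :: "nat \<Rightarrow> real^3" where
  "octagon_b k = [vector [-oct_q, -oct_s, -oct_s], vector [-oct_q, oct_s, oct_s],
     vector [-oct_q, oct_s, -oct_s], vector [-oct_q, -oct_s, oct_s],
     vector [-oct_p, oct_r, -oct_r], vector [-oct_p, -oct_r, oct_r],
     vector [-oct_p, -oct_r, -oct_r], vector [-oct_p, oct_r, oct_r]] ! k"

lemma sqrt_2_less_2: "sqrt 2 < (2::real)"
  by (rule real_less_lsqrt) simp_all

lemma octagon_coordinate_products:
  "oct_p * oct_p = (3 - sqrt 2) / 7" "oct_q * oct_q = (3 + sqrt 2) / 7"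
  "oct_r * oct_r = (4 + sqrt 2) / 14" "oct_s * oct_s = (4 - sqrt 2) / 14"
  "oct_p * oct_q = sqrt 7 / 7" "oct_q * oct_p = sqrt 7 / 7"
  "oct_r * oct_s = sqrt 2 * sqrt 7 / 14" "oct_s * oct_r = sqrt 2 * sqrt 7 / 14"
proof -
  show "oct_p * oct_p = (3 - sqrt 2) / 7" "oct_q * oct_q = (3 + sqrt 2) / 7"
    "oct_r * oct_r = (4 + sqrt 2) / 14" "oct_s * oct_s = (4 - sqrt 2) / 14"
    using sqrt_2_less_2 by (simp_all add: oct_p_def oct_q_def oct_r_def oct_s_def)
  have "oct_p * oct_q = sqrt (7 / 49)"
    by (simp add: oct_p_def oct_q_def real_sqrt_mult[symmetric] field_simps)
  then show "oct_p * oct_q = sqrt 7 / 7" "oct_q * oct_p = sqrt 7 / 7"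
    by (simp_all add: real_sqrt_divide real_div_sqrt mult.commute)
  have "oct_r * oct_s = sqrt (14 / 196)"
    by (simp add: oct_r_def oct_s_def real_sqrt_mult[symmetric] field_simps)
  then show "oct_r * oct_s = sqrt 2 * sqrt 7 / 14" "oct_s * oct_r = sqrt 2 * sqrt 7 / 14"
    by (simp_all add: real_sqrt_divide real_sqrt_mult[symmetric] real_div_sqrt mult.commute)
qed

lemma less_8_cases:
  "i < (8::nat) \<Longrightarrow> i = 0 \<or> i = 1 \<or> i = 2 \<or> i = 3 \<or> i = 4 \<or> i = 5 \<or> i = 6 \<or> i = 7"
  by arith

lemmas octagon_inner_simps =
  octagon_a_def octagon_b_def inner_vec_def sum_3 octagon_coordinate_products

lemma octagon_unit:
  "i < 8 \<Longrightarrow> norm (octagon_a i) = 1 \<and> norm (octagon_b i) = 1"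
  by (drule less_8_cases) (auto simp: norm_eq_1 octagon_inner_simps field_simps)

lemma octagon_inner_ab:
  assumes "i < 8"
  shows "octagon_a i \<bullet> octagon_b i \<noteq> 1"
proof -
  have "(sqrt 7 * (1 + sqrt 2))\<^sup>2 = 7 * (3 + 2 * sqrt 2)"
    by (simp add: power_mult_distrib power2_sum)
  then have "(sqrt 7 * (1 + sqrt 2))\<^sup>2 < 7\<^sup>2"
    using sqrt_2_less_2 by simp
  then have bound: "sqrt 7 * (1 + sqrt 2) < 7"
    by (rule power2_less_imp_less) simp
  have "0 \<le> sqrt 7" "0 \<le> sqrt 2 * sqrt 7"
    by simp_all
  then have "7 * (octagon_a i \<bullet> octagon_b i) \<le> sqrt 7 * (1 + sqrt 2)"
    using less_8_cases[OF assms]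
    by (elim disjE) (simp add: octagon_inner_simps field_simps; linarith)+
  with bound show ?thesis by auto
qed

lemma octagon_pairs:
  "i < 8 \<Longrightarrow> j < 8 \<Longrightarrow> i \<noteq> j \<Longrightarrow>
    (octagon_a i \<bullet> octagon_a j) * (octagon_b i \<bullet> octagon_b j) = -1/7"
  by (drule less_8_cases, drule less_8_cases, elim disjE)
    (simp_all add: octagon_inner_simps, simp_all add: field_simps)

lemma tight_simplex_8: "tight_simplex 2 8 (\<lambda>k. pair_proj (octagon_a k) (octagon_b k))"
  by (rule tight_simplex_pair_proj) (simp_all add: octagon_unit octagon_inner_ab octagon_pairs)

theorem theorem6p8:
  shows "(\<exists>P :: nat \<Rightarrow> real^4^4. tight_simplex 2 7 P) \<and>
         (\<exists>P :: nat \<Rightarrow> real^4^4. tight_simplex 2 8 P)"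
  using tight_simplex_7 tight_simplex_8 by blast

end
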